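(* The bounded orbits of $\Phi_{\mathrm{Id}}\colon\mathrm{M}\mapsto\mathrm{M}^2$ on $\mathcal{M}(2;\mathbb{C})$ are contained in $\overline{\mathrm{W}^s_{\mathrm{Id}}(\mathbf{0})}$; every element $\mathrm{M}$ of $\overline{\mathrm{W}^s_{\mathrm{Id}}(\mathbf{0})}$ has a bounded orbit, except the matrices whose Jordan form is $\begin{bmatrix}\lambda&1\\0&\lambda\end{bmatrix}$ with $|\lambda|=1$.
   Context: $\mathrm{W}^s_{\mathrm{Id}}(\mathbf{0})=\{\mathrm{M}\in\mathcal{M}(2;\mathbb{C}):\Phi_{\mathrm{Id}}^k(\mathrm{M})\to\mathbf{0}\text{ as }k\to\infty\}$, where $\mathbf{0}$ is the zero matrix; the bar denotes topological closure. *)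

theory Defs
  imports "HOL-Analysis.Analysis"
begin

type_synonym cmat2 = "complex ^ 2 ^ 2"

definition Phi_Id :: "cmat2 \<Rightarrow> cmat2" where
  "Phi_Id M = M ** M"

definition Ws_Id_0 :: "cmat2 set" where
  "Ws_Id_0 = {M. (\<lambda>k. (Phi_Id ^^ k) M) \<longlonglongrightarrow> 0}"

definition bounded_orbit :: "cmat2 \<Rightarrow> bool" where
  "bounded_orbit M \<longleftrightarrow> bounded (range (\<lambda>k. (Phi_Id ^^ k) M))"

definition jordan_block2 :: "complex \<Rightarrow> cmat2" where
  "jordan_block2 l = (\<chi> i j. if i = j then l else if i = 1 \<and> j = 2 then 1 else 0)"

definition has_jordan_form_block :: "cmat2 \<Rightarrow> complex \<Rightarrow> bool" where
  "has_jordan_form_block M l \<longleftrightarrow>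
     (\<exists>P::cmat2. invertible P \<and> M = P ** jordan_block2 l ** matrix_inv P)"

end

theory Submission
  imports Defs
begin

text \<open>Let a, b be the eigenvalues of M. By Cayley--Hamilton, M^n = U_n M - ab U_(n-1) I,
  where U_n = (a^n - b^n)/(a - b) is the Lucas sequence of (a, b); for non-scalar M the two
  coefficients are conversely bounded by a multiple of the norm of M^n. Hence a bounded orbit
  forces |a|, |b| \<le> 1. This condition describes the closure of the stable set of 0: it is
  closed, and sM with 0 < s < 1 lies in the stable set. Conversely, for |a|, |b| \<le> 1 the
  sequence U_n is bounded unless a = b is unimodular, in which case U_n = n a^(n-1); for
  non-scalar M this is exactly the case of a Jordan block with unimodular eigenvalue.\<close>

lemma matrix_mult_cmat2_nth: "((A::cmat2) ** B) $ i $ j = A$i$1 * B$1$j + A$i$2 * B$2$j"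
  by (simp add: matrix_matrix_mult_def sum_2)

lemma cmat2_eq_iff:
  "(A::cmat2) = B \<longleftrightarrow> A$1$1 = B$1$1 \<and> A$1$2 = B$1$2 \<and> A$2$1 = B$2$1 \<and> A$2$2 = B$2$2"
  by (simp add: vec_eq_iff forall_2)

lemma mat_nth: "(mat c :: 'a::zero^'n^'n) $ i $ j = (if i = j then c else 0)"
  by (simp add: mat_def)

lemma trace_cmat2: "trace (M::cmat2) = M$1$1 + M$2$2"
  by (simp add: trace_def sum_2)

lemma jordan_block2_nth [simp]:
  "jordan_block2 l $ 1 $ 1 = l" "jordan_block2 l $ 1 $ 2 = 1"
  "jordan_block2 l $ 2 $ 1 = 0" "jordan_block2 l $ 2 $ 2 = l"
  by (simp_all add: jordan_block2_def)

lemma norm_cmat2_le_entries: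
  "norm (A::cmat2) \<le> cmod (A$1$1) + cmod (A$1$2) + cmod (A$2$1) + cmod (A$2$2)"
proof -
  have sum_le: "norm (x::complex^2) \<le> norm (x$1) + norm (x$2)" for x :: "complex^2"
    using L2_set_le_sum[of UNIV "\<lambda>i. norm (x$i)"] by (simp add: norm_vec_def sum_2)
  have "norm A \<le> norm (A$1) + norm (A$2)"
    using L2_set_le_sum[of UNIV "\<lambda>i. norm (A$i)"] by (simp add: norm_vec_def sum_2)
  with sum_le[of "A$1"] sum_le[of "A$2"] show ?thesis by simp
qed

lemma norm_cmat2_nth_le: "cmod ((A::cmat2)$i$j) \<le> norm A"
  using Finite_Cartesian_Product.norm_nth_le[of "A$i" j] Finite_Cartesian_Product.norm_nth_le[of A i]
  by (rule order_trans)

lemma vieta_roots_exist: "\<exists>a b. a + b = t \<and> a * b = (d::complex)"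
proof -
  define s where "s = csqrt (t\<^sup>2 - 4*d)"
  have "s\<^sup>2 = t\<^sup>2 - 4*d" by (simp add: s_def)
  then have "((t+s)/2) * ((t-s)/2) = d" by (simp add: field_simps power2_eq_square)
  then show ?thesis by (intro exI[of _ "(t+s)/2"] exI[of _ "(t-s)/2"]) (simp add: field_simps)
qed

subsection \<open>Matrix powers and the orbit of the squaring map\<close>

primrec mpow :: "cmat2 \<Rightarrow> nat \<Rightarrow> cmat2" where
  "mpow M 0 = mat 1"
| "mpow M (Suc n) = M ** mpow M n"

lemma mpow_add: "mpow M (m + n) = mpow M m ** mpow M n"
  by (induct m) (simp_all add: matrix_mul_assoc)

lemma Phi_Id_funpow: "(Phi_Id ^^ k) M = mpow M (2^k)"
  by (induct k) (simp_all add: Phi_Id_def mpow_add[symmetric] mult_2)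

lemma bounded_orbit_iff: "bounded_orbit M \<longleftrightarrow> (\<exists>B. \<forall>k. norm (mpow M (2^k)) \<le> B)"
  by (simp add: bounded_orbit_def bounded_iff Phi_Id_funpow)

lemma mpow_mat: "mpow (mat c) n = mat (c ^ n)"
  by (induct n) (simp_all add: cmat2_eq_iff matrix_mult_cmat2_nth mat_nth)

subsection \<open>Lucas sequences\<close>

primrec lucasU :: "'a::comm_ring_1 \<Rightarrow> 'a \<Rightarrow> nat \<Rightarrow> 'a" where
  "lucasU a b 0 = 0"
| "lucasU a b (Suc n) = a^n + b * lucasU a b n"

definition lucasC :: "'a::comm_ring_1 \<Rightarrow> 'a \<Rightarrow> nat \<Rightarrow> 'a" where
  "lucasC a b n = (case n of 0 \<Rightarrow> 1 | Suc m \<Rightarrow> - (a*b) * lucasU a b m)"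

lemma lucasC_0 [simp]: "lucasC a b 0 = 1"
  and lucasC_Suc [simp]: "lucasC a b (Suc n) = - (a*b) * lucasU a b n"
  by (simp_all add: lucasC_def)

lemma lucasU_Suc_recurrence: "lucasU a b (Suc n) = (a + b) * lucasU a b n + lucasC a b n"
  by (cases n) (simp_all add: algebra_simps)

lemma power_eq_lucas: "a ^ n = lucasU a b n * a + lucasC a b n"
proof (induct n)
  case (Suc n)
  have "a ^ Suc n = a * (lucasU a b n * a + lucasC a b n)" using Suc by simp
  also have "\<dots> = lucasU a b (Suc n) * a + lucasC a b (Suc n)"
    by (subst lucasU_Suc_recurrence) (simp add: algebra_simps)
  finally show ?case .
qed simp

lemma lucasU_mult_diff: "(a - b) * lucasU a b n = a^n - b^n"
proof (induct n)
  case (Suc n)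
  have "(a - b) * lucasU a b (Suc n) = (a - b) * a^n + b * ((a - b) * lucasU a b n)"
    by (simp add: algebra_simps)
  also have "\<dots> = (a - b) * a^n + b * (a^n - b^n)" using Suc by simp
  finally show ?case by (simp add: algebra_simps)
qed simp

lemma lucasU_same: "lucasU a a (Suc n) = of_nat (Suc n) * a ^ n"
  by (induct n) (simp_all add: algebra_simps)

lemma norm_lucasU_le:
  fixes a b :: "'a::real_normed_field"
  assumes "norm a \<le> r" "norm b \<le> r"
  shows "norm (lucasU a b (Suc n)) \<le> real (Suc n) * r ^ n"
proof (induct n)
  case (Suc n)
  have r: "0 \<le> r" using assms(1) norm_ge_zero order_trans by blast
  have "norm (lucasU a b (Suc (Suc n))) \<le> norm a ^ Suc n + norm b * norm (lucasU a b (Suc n))"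
    by (metis lucasU.simps(2) norm_mult norm_power norm_triangle_ineq)
  also have "\<dots> \<le> r ^ Suc n + r * (real (Suc n) * r ^ n)"
    by (intro add_mono power_mono mult_mono Suc assms) (auto simp: r)
  also have "\<dots> = real (Suc (Suc n)) * r ^ Suc n" by (simp add: algebra_simps)
  finally show ?case .
qed simp

lemma lucasU_tendsto_0:
  fixes a b :: "'a::real_normed_field"
  assumes "norm a < 1" "norm b < 1"
  shows "lucasU a b \<longlonglongrightarrow> 0"
proof -
  define r where "r = max (norm a) (norm b)"
  have r: "0 \<le> r" "r < 1" "norm a \<le> r" "norm b \<le> r"
    using assms by (auto simp: r_def le_max_iff_disj)
  have "(\<lambda>n. real n * r ^ n + r ^ n) \<longlonglongrightarrow> 0 + 0"
    by (intro tendsto_add powser_times_n_limit_0[of r, simplified] LIMSEQ_power_zero) (use r in auto)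
  moreover have "\<forall>\<^sub>F n in sequentially. norm (lucasU a b (Suc n)) \<le> real n * r ^ n + r ^ n"
    using norm_lucasU_le[OF r(3,4)] by (simp add: algebra_simps)
  ultimately have "(\<lambda>n. lucasU a b (Suc n)) \<longlonglongrightarrow> 0"
    using Lim_null_comparison by force
  then show ?thesis by (rule LIMSEQ_imp_Suc)
qed

lemma lucasC_tendsto_0:
  fixes a b :: "'a::real_normed_field"
  assumes "norm a < 1" "norm b < 1"
  shows "lucasC a b \<longlonglongrightarrow> 0"
proof -
  have "(\<lambda>n. lucasC a b (Suc n)) \<longlonglongrightarrow> - (a*b) * 0"
    unfolding lucasC_Suc by (intro tendsto_mult tendsto_const lucasU_tendsto_0 assms)
  then show ?thesis using LIMSEQ_imp_Suc[of "lucasC a b" 0] by simp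
qed

lemma lucasU_bounded:
  fixes a b :: "'a::real_normed_field"
  assumes "norm a \<le> 1" "norm b \<le> 1" "\<not> (a = b \<and> norm a = 1)"
  shows "\<exists>K. \<forall>n. norm (lucasU a b n) \<le> K"
proof (cases "a = b")
  case False
  have "norm (lucasU a b n) \<le> 2 / norm (a - b)" for n
  proof -
    have "norm (a - b) * norm (lucasU a b n) = norm (a^n - b^n)"
      by (metis lucasU_mult_diff norm_mult)
    also have "\<dots> \<le> norm a ^ n + norm b ^ n" by (metis norm_power norm_triangle_ineq4)
    also have "\<dots> \<le> 1 + 1" using assms by (intro add_mono power_le_one) auto
    finally show ?thesis using False by (simp add: field_simps mult.commute)
  qed
  then show ?thesis by blast
next
  case True
  with assms have "lucasU a b \<longlonglongrightarrow> 0" by (intro lucasU_tendsto_0) auto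
  then have "Bseq (lucasU a b)" by (intro convergent_imp_Bseq convergentI)
  then show ?thesis by (rule BseqE) blast
qed

subsection \<open>Cayley--Hamilton expansion of the powers\<close>

lemma mpow_nth_lucas:
  assumes "a + b = trace M" "a * b = det M"
  shows "mpow M n $ i $ j = lucasU a b n * M$i$j + lucasC a b n * (if i = j then 1 else 0)"
proof (induct n arbitrary: i j)
  case 0 then show ?case by (simp add: mat_nth)
next
  case (Suc n)
  have t: "a + b = M$1$1 + M$2$2" and d: "a * b = M$1$1 * M$2$2 - M$1$2 * M$2$1"
    using assms by (simp_all add: trace_cmat2 det_2)
  have "mpow M (Suc n) $ 1 $ 1 = lucasU a b (Suc n) * M$1$1 + lucasC a b (Suc n)"
    "mpow M (Suc n) $ 1 $ 2 = lucasU a b (Suc n) * M$1$2"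
    "mpow M (Suc n) $ 2 $ 1 = lucasU a b (Suc n) * M$2$1"
    "mpow M (Suc n) $ 2 $ 2 = lucasU a b (Suc n) * M$2$2 + lucasC a b (Suc n)"
    by (simp_all add: matrix_mult_cmat2_nth lucasU_Suc_recurrence Suc del: lucasU.simps)
      (use t d in algebra)+
  then show ?case using exhaust_2[of i] exhaust_2[of j] by auto
qed

lemma norm_mpow_le_lucas:
  assumes "a + b = trace M" "a * b = det M"
  shows "norm (mpow M n) \<le>
    cmod (lucasU a b n) * (cmod (M$1$1) + cmod (M$1$2) + cmod (M$2$1) + cmod (M$2$2)) + 2 * cmod (lucasC a b n)"
proof -
  have "norm (mpow M n) \<le> cmod (mpow M n$1$1) + cmod (mpow M n$1$2) + cmod (mpow M n$2$1) + cmod (mpow M n$2$2)"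
    by (rule norm_cmat2_le_entries)
  also have "\<dots> \<le> (cmod (lucasU a b n) * cmod (M$1$1) + cmod (lucasC a b n))
      + cmod (lucasU a b n) * cmod (M$1$2) + cmod (lucasU a b n) * cmod (M$2$1)
      + (cmod (lucasU a b n) * cmod (M$2$2) + cmod (lucasC a b n))"
    unfolding mpow_nth_lucas[OF assms]
    by (intro add_mono) (auto intro: order_trans[OF norm_triangle_ineq] simp: norm_mult)
  finally show ?thesis by (simp add: algebra_simps)
qed

definition is_scalar :: "cmat2 \<Rightarrow> bool" where
  "is_scalar M \<longleftrightarrow> (\<exists>c. M = mat c)"

lemma not_scalar_cases:
  assumes "\<not> is_scalar M"
  shows "M$1$2 \<noteq> 0 \<or> M$2$1 \<noteq> 0 \<or> M$1$1 \<noteq> M$2$2"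
  using assms by (auto simp: is_scalar_def cmat2_eq_iff mat_nth intro!: exI[of _ "M$1$1"])

text \<open>Reading off an off-diagonal entry of M^n, or the difference of its diagonal entries,
  gives U_n times a nonzero constant.\<close>

lemma lucasU_le_norm_mpow:
  assumes "a + b = trace M" "a * b = det M" "\<not> is_scalar M"
  obtains e where "e \<noteq> 0" "\<And>n. cmod (lucasU a b n) * cmod e \<le> 2 * norm (mpow M n)"
proof -
  note expand = mpow_nth_lucas[OF assms(1,2)]
  have entry: "cmod (mpow M n $ i $ j) \<le> norm (mpow M n)" for n i j by (rule norm_cmat2_nth_le)
  have offdiag: "cmod (lucasU a b n) * cmod (M$i$j) \<le> 2 * norm (mpow M n)" if "i \<noteq> j" for n i j
  proof -
    have "cmod (lucasU a b n) * cmod (M$i$j) \<le> norm (mpow M n)"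
      using expand[of n i j] entry[of n i j] that by (simp add: norm_mult)
    then show ?thesis using norm_ge_zero[of "mpow M n"] by linarith
  qed
  have diag: "cmod (lucasU a b n) * cmod (M$1$1 - M$2$2) \<le> 2 * norm (mpow M n)" for n
  proof -
    have "lucasU a b n * (M$1$1 - M$2$2) = mpow M n $1$1 - mpow M n $2$2"
      using expand[of n 1 1] expand[of n 2 2] by (simp add: algebra_simps)
    then have "cmod (lucasU a b n) * cmod (M$1$1 - M$2$2) \<le> cmod (mpow M n $1$1) + cmod (mpow M n $2$2)"
      by (metis norm_mult norm_triangle_ineq4)
    then show ?thesis using entry[of n 1 1] entry[of n 2 2] by simp
  qed
  consider "M$1$2 \<noteq> 0" | "M$2$1 \<noteq> 0" | "M$1$1 - M$2$2 \<noteq> 0"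
    using not_scalar_cases[OF assms(3)] by auto
  then show thesis
  proof cases
    case 1 then show thesis using that offdiag[where i=1 and j=2] by simp
  next
    case 2 then show thesis using that offdiag[where i=2 and j=1] by simp
  next
    case 3 then show thesis using that diag by blast
  qed
qed

lemma lucas_le_norm_mpow:
  assumes "a + b = trace M" "a * b = det M" "\<not> is_scalar M"
  shows "\<exists>C>0. \<forall>n. cmod (lucasU a b n) \<le> C * norm (mpow M n) \<and> cmod (lucasC a b n) \<le> C * norm (mpow M n)"
proof -
  obtain e where e: "e \<noteq> 0" "\<And>n. cmod (lucasU a b n) * cmod e \<le> 2 * norm (mpow M n)"
    using lucasU_le_norm_mpow[OF assms] by blast
  define m where "m = cmod (M$1$1)"
  define C where "C = 1 + (2 + 2 * m) / cmod e"
  have "cmod (lucasU a b n) \<le> C * norm (mpow M n) \<and> cmod (lucasC a b n) \<le> C * norm (mpow M n)" for n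
  proof -
    let ?N = "norm (mpow M n)"
    have U: "cmod (lucasU a b n) \<le> 2 * ?N / cmod e" using e by (simp add: field_simps)
    also have "\<dots> \<le> C * ?N" using e(1) by (simp add: C_def m_def field_simps)
    finally have U_le: "cmod (lucasU a b n) \<le> C * ?N" .
    have "lucasC a b n = mpow M n $1$1 - lucasU a b n * M$1$1"
      using mpow_nth_lucas[OF assms(1,2), of n 1 1] by simp
    then have "cmod (lucasC a b n) \<le> cmod (mpow M n $1$1) + cmod (lucasU a b n) * m"
      unfolding m_def by (metis norm_mult norm_triangle_ineq4)
    also have "\<dots> \<le> ?N + 2 * ?N / cmod e * m"
      using U norm_cmat2_nth_le[of "mpow M n" 1 1] by (intro add_mono mult_right_mono) (auto simp: m_def)
    also have "\<dots> \<le> C * ?N" using e(1) by (simp add: C_def m_def field_simps)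
    finally show ?thesis using U_le by blast
  qed
  moreover have "C > 0" by (simp add: C_def m_def add_pos_nonneg)
  ultimately show ?thesis by blast
qed

subsection \<open>The closure of the stable set\<close>

definition char_roots_in_disc :: "cmat2 \<Rightarrow> bool" where
  "char_roots_in_disc M \<longleftrightarrow> (\<forall>x. x\<^sup>2 - trace M * x + det M = 0 \<longrightarrow> cmod x \<le> 1)"

lemma char_roots_in_discD:
  assumes "char_roots_in_disc M" "a + b = trace M" "a * b = det M"
  shows "cmod a \<le> 1" "cmod b \<le> 1"
proof -
  have "a\<^sup>2 - trace M * a + det M = 0" "b\<^sup>2 - trace M * b + det M = 0"
    unfolding assms(2,3)[symmetric] by (simp_all add: algebra_simps power2_eq_square)
  then show "cmod a \<le> 1" "cmod b \<le> 1" using assms(1) unfolding char_roots_in_disc_def by blast+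
qed

lemma le_1_if_pow2_powers_bounded:
  fixes r :: real
  assumes "\<And>k. r ^ (2^k) \<le> B"
  shows "r \<le> 1"
proof (rule ccontr)
  assume "\<not> r \<le> 1"
  then obtain k where "B < r ^ k" using real_arch_pow[of r B] by auto
  also have "\<dots> \<le> r ^ (2^k)" using \<open>\<not> r \<le> 1\<close> by (intro power_increasing) (simp_all add: less_imp_le)
  finally show False using assms[of k] by simp
qed

lemma char_roots_in_disc_if_bounded_orbit:
  assumes "bounded_orbit M"
  shows "char_roots_in_disc M"
  unfolding char_roots_in_disc_def
proof (intro allI impI)
  fix x assume x: "x\<^sup>2 - trace M * x + det M = 0"
  define b where "b = trace M - x"
  have ab: "x + b = trace M" "x * b = det M"
    using x by (simp_all add: b_def algebra_simps power2_eq_square)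
  obtain B where B: "\<And>k. norm (mpow M (2^k)) \<le> B" using assms bounded_orbit_iff by blast
  have "\<exists>B'. \<forall>k. cmod x ^ (2^k) \<le> B'"
  proof (cases "is_scalar M")
    case True
    then obtain c where M: "M = mat c" by (auto simp: is_scalar_def)
    have "(x - c)\<^sup>2 = 0"
      using x by (simp add: M trace_cmat2 det_2 mat_nth power2_eq_square algebra_simps)
    then have "x = c" by simp
    have "cmod x ^ (2^k) \<le> B" for k
    proof -
      have "cmod x ^ (2^k) = cmod (mpow M (2^k) $ 1 $ 1)"
        by (simp add: M \<open>x = c\<close> mpow_mat mat_nth norm_power)
      also have "\<dots> \<le> B" using norm_cmat2_nth_le[of "mpow M (2^k)" 1 1] B[of k] by linarith
      finally show ?thesis .
    qed
    then show ?thesis by blast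
  next
    case False
    obtain C where C: "C > 0"
      "\<And>n. cmod (lucasU x b n) \<le> C * norm (mpow M n) \<and> cmod (lucasC x b n) \<le> C * norm (mpow M n)"
      using lucas_le_norm_mpow[OF ab False] by blast
    have "cmod x ^ (2^k) \<le> C * B * cmod x + C * B" for k
    proof -
      let ?n = "2^k::nat"
      have "C * norm (mpow M ?n) \<le> C * B" using B[of k] C(1) by (intro mult_left_mono) auto
      then have UC: "cmod (lucasU x b ?n) \<le> C * B" "cmod (lucasC x b ?n) \<le> C * B"
        using C(2)[of ?n] by linarith+
      have "cmod x ^ ?n = cmod (lucasU x b ?n * x + lucasC x b ?n)"
        by (simp add: power_eq_lucas[symmetric] norm_power)
      also have "\<dots> \<le> cmod (lucasU x b ?n) * cmod x + cmod (lucasC x b ?n)"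
        by (metis norm_mult norm_triangle_ineq)
      also have "\<dots> \<le> C * B * cmod x + C * B" by (intro add_mono mult_right_mono UC) simp
      finally show ?thesis .
    qed
    then show ?thesis by blast
  qed
  then show "cmod x \<le> 1" using le_1_if_pow2_powers_bounded by blast
qed

lemma in_Ws_Id_0_if_char_roots_lt_1:
  assumes "a + b = trace A" "a * b = det A" "cmod a < 1" "cmod b < 1"
  shows "A \<in> Ws_Id_0"
proof -
  let ?S = "cmod (A$1$1) + cmod (A$1$2) + cmod (A$2$1) + cmod (A$2$2)"
  have bound: "(\<lambda>n. cmod (lucasU a b n) * ?S + 2 * cmod (lucasC a b n)) \<longlonglongrightarrow> 0 * ?S + 2 * 0"
    by (intro tendsto_add tendsto_mult tendsto_const tendsto_norm_zero
        lucasU_tendsto_0 lucasC_tendsto_0 assms(3,4))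
  have "mpow A \<longlonglongrightarrow> 0"
    by (rule Lim_null_comparison[OF _ bound[simplified]]) (use norm_mpow_le_lucas[OF assms(1,2)] in auto)
  then have "(mpow A \<circ> (\<lambda>k. 2^k)) \<longlonglongrightarrow> 0"
    by (rule LIMSEQ_subseq_LIMSEQ) (simp add: strict_mono_def)
  then show ?thesis by (simp add: Ws_Id_0_def Phi_Id_funpow o_def)
qed

lemma in_closure_Ws_Id_0_if_char_roots_in_disc:
  assumes "char_roots_in_disc M"
  shows "M \<in> closure Ws_Id_0"
proof -
  obtain a b where ab: "a + b = trace M" "a * b = det M" using vieta_roots_exist by blast
  note roots = char_roots_in_discD[OF assms ab]
  define s where "s n = 1 - inverse (real (Suc n)) / 2" for n
  have s: "0 < s n" "s n < 1" for n
    unfolding s_def by (auto simp: field_simps)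
  have scale_nth: "(s n *\<^sub>R M) $ i $ j = of_real (s n) * M $ i $ j" for n i j
    by (simp only: vector_scaleR_component) (simp add: scaleR_conv_of_real)
  have "s n *\<^sub>R M \<in> Ws_Id_0" for n
  proof (rule in_Ws_Id_0_if_char_roots_lt_1)
    have "a + b = M$1$1 + M$2$2" "a * b = M$1$1 * M$2$2 - M$1$2 * M$2$1"
      using ab by (simp_all add: trace_cmat2 det_2)
    then show "of_real (s n) * a + of_real (s n) * b = trace (s n *\<^sub>R M)"
      "of_real (s n) * a * (of_real (s n) * b) = det (s n *\<^sub>R M)"
      unfolding trace_cmat2 det_2 scale_nth by algebra+
    have "cmod (of_real (s n) * a) \<le> s n" "cmod (of_real (s n) * b) \<le> s n"
      using roots s[of n] by (auto simp: norm_mult intro: mult_left_le)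
    then show "cmod (of_real (s n) * a) < 1" "cmod (of_real (s n) * b) < 1"
      using s[of n] by linarith+
  qed
  moreover have "(\<lambda>n. s n *\<^sub>R M) \<longlonglongrightarrow> 1 *\<^sub>R M"
  proof (intro tendsto_scaleR tendsto_const)
    have "(\<lambda>n. 1 - inverse (real (Suc n)) / 2) \<longlonglongrightarrow> 1 - 0 / 2"
      by (intro tendsto_diff tendsto_divide tendsto_const LIMSEQ_inverse_real_of_nat) simp
    then show "s \<longlonglongrightarrow> 1" by (simp add: s_def[abs_def])
  qed
  ultimately show ?thesis unfolding closure_sequential by (intro exI[of _ "\<lambda>n. s n *\<^sub>R M"]) simp
qed

lemma bounded_orbit_if_in_Ws_Id_0: "A \<in> Ws_Id_0 \<Longrightarrow> bounded_orbit A"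
  unfolding Ws_Id_0_def bounded_orbit_def using convergent_imp_bounded by blast

text \<open>If |y| > 1, the characteristic polynomial of any X with eigenvalues in the unit disc
  has modulus at least (|y| - 1)^2 at y, so y cannot become a root in the limit.\<close>

lemma char_roots_in_disc_if_in_closure_Ws_Id_0:
  assumes "M \<in> closure Ws_Id_0"
  shows "char_roots_in_disc M"
  unfolding char_roots_in_disc_def
proof (intro allI impI; rule ccontr)
  fix y assume y: "y\<^sup>2 - trace M * y + det M = 0" and y1: "\<not> cmod y \<le> 1"
  obtain X where X: "\<And>n. X n \<in> Ws_Id_0" "X \<longlonglongrightarrow> M" using assms closure_sequential by blast
  let ?v = "\<lambda>n. y\<^sup>2 - trace (X n) * y + det (X n)"
  have "?v \<longlonglongrightarrow> y\<^sup>2 - trace M * y + det M"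
    unfolding trace_cmat2 det_2 by (intro tendsto_intros X(2))
  then have v0: "(\<lambda>n. norm (?v n)) \<longlonglongrightarrow> 0" using y by (simp add: tendsto_norm_zero)
  have "(cmod y - 1)\<^sup>2 \<le> norm (?v n)" for n
  proof -
    obtain a b where ab: "a + b = trace (X n)" "a * b = det (X n)" using vieta_roots_exist by blast
    note roots = char_roots_in_discD[OF char_roots_in_disc_if_bounded_orbit
        [OF bounded_orbit_if_in_Ws_Id_0[OF X(1)]] ab]
    have "?v n = (y - a) * (y - b)" unfolding ab[symmetric] by (simp add: algebra_simps power2_eq_square)
    then have "norm (?v n) = cmod (y - a) * cmod (y - b)" by (simp add: norm_mult)
    moreover have "cmod y - 1 \<le> cmod (y - a)" "cmod y - 1 \<le> cmod (y - b)"
      using roots norm_triangle_ineq2[of y a] norm_triangle_ineq2[of y b] by linarith+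
    ultimately show ?thesis using y1 by (simp add: power2_eq_square mult_mono)
  qed
  then have "(cmod y - 1)\<^sup>2 \<le> 0" by (intro LIMSEQ_le_const[OF v0]) auto
  with y1 show False by simp
qed

lemma in_closure_Ws_Id_0_iff: "M \<in> closure Ws_Id_0 \<longleftrightarrow> char_roots_in_disc M"
  using char_roots_in_disc_if_in_closure_Ws_Id_0 in_closure_Ws_Id_0_if_char_roots_in_disc ..

subsection \<open>Jordan blocks\<close>

lemma matrix_inv_mult:
  "invertible (P::'a::semiring_1^'n^'n) \<Longrightarrow> P ** matrix_inv P = mat 1 \<and> matrix_inv P ** P = mat 1"
  unfolding invertible_def matrix_inv_def by (rule someI_ex)

lemma has_jordan_form_blockD:
  assumes "has_jordan_form_block M l"
  shows "trace M = l + l" "det M = l * l" "\<not> is_scalar M"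
proof -
  obtain P where P: "invertible P" "M = P ** jordan_block2 l ** matrix_inv P"
    using assms has_jordan_form_block_def by blast
  define Q where "Q = matrix_inv P"
  have PQ: "P ** Q = mat 1" "Q ** P = mat 1" using matrix_inv_mult[OF P(1)] Q_def by auto
  let ?J = "jordan_block2 l"
  have "trace M = trace (Q ** (P ** ?J))" unfolding P(2) Q_def[symmetric] by (rule trace_mul_sym)
  also have "\<dots> = trace ?J" by (simp add: matrix_mul_assoc PQ)
  finally show "trace M = l + l" by (simp add: trace_cmat2)
  have "det M = det (P ** Q) * det ?J" unfolding P(2) Q_def[symmetric] by (simp add: det_mul)
  then show "det M = l * l" by (simp add: PQ det_2 mat_nth)
  have J: "Q ** M ** P = ?J" unfolding P(2) Q_def[symmetric]
    by (simp add: matrix_mul_assoc PQ) (simp add: matrix_mul_assoc[symmetric] PQ)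
  show "\<not> is_scalar M"
  proof
    assume "is_scalar M"
    then obtain c where "M = mat c" by (auto simp: is_scalar_def)
    then have "Q ** M ** P = mat c ** (Q ** P)"
      by (simp add: cmat2_eq_iff matrix_mult_cmat2_nth mat_nth algebra_simps)
    then have "?J = mat c" by (simp add: J PQ)
    then show False using jordan_block2_nth(2)[of l] by (simp add: mat_nth)
  qed
qed

lemma has_jordan_form_block_if_conj:
  assumes "invertible P" "M ** P = P ** jordan_block2 l"
  shows "has_jordan_form_block M l"
proof -
  have "M = M ** (P ** matrix_inv P)" using matrix_inv_mult[OF assms(1)] by simp
  also have "\<dots> = P ** jordan_block2 l ** matrix_inv P" by (simp add: matrix_mul_assoc assms(2))
  finally show ?thesis unfolding has_jordan_form_block_def using assms(1) by blast
qed

lemma has_jordan_form_blockI: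
  assumes "trace M = l + l" "det M = l * l" "\<not> is_scalar M"
  shows "has_jordan_form_block M l"
proof -
  have t: "M$1$1 + M$2$2 = l + l" and d: "M$1$1 * M$2$2 - M$1$2 * M$2$1 = l * l"
    using assms by (simp_all add: trace_cmat2 det_2)
  show ?thesis
  proof (cases "M$2$1 = 0")
    case False
    define c where "c = M$2$1"
    define \<alpha> where "\<alpha> = M$1$1 - l"
    \<comment> \<open>columns: the eigenvector (M11 - l, M21) and the generalized eigenvector (1, 0)\<close>
    define P :: cmat2 where "P = (\<chi> i j. if i = 1 then (if j = 1 then \<alpha> else 1) else (if j = 1 then c else 0))"
    define Q :: cmat2 where "Q = (\<chi> i j. if i = 1 then (if j = 1 then 0 else 1/c) else (if j = 1 then 1 else - \<alpha>/c))"
    have "c \<noteq> 0" using False c_def by simp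
    then have "P ** Q = mat 1 \<and> Q ** P = mat 1"
      by (simp add: cmat2_eq_iff matrix_mult_cmat2_nth P_def Q_def mat_nth field_simps)
    then have "invertible P" unfolding invertible_def by blast
    moreover have "M$1$1 * \<alpha> + M$1$2 * c = \<alpha> * l" "c * \<alpha> + M$2$2 * c = c * l"
      unfolding \<alpha>_def c_def using t d by algebra+
    then have "M ** P = P ** jordan_block2 l"
      by (simp add: cmat2_eq_iff matrix_mult_cmat2_nth P_def \<alpha>_def c_def)
    ultimately show ?thesis by (rule has_jordan_form_block_if_conj)
  next
    case True
    have "(M$1$1 - l)\<^sup>2 = 0" using t d True by algebra
    then have diag: "M$1$1 = l" "M$2$2 = l" using t by simp_all
    define b where "b = M$1$2"
    have "b \<noteq> 0" using not_scalar_cases[OF assms(3)] True diag b_def by simp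
    define P :: cmat2 where "P = (\<chi> i j. if i = 1 then (if j = 1 then b else 0) else (if j = 1 then 0 else 1))"
    define Q :: cmat2 where "Q = (\<chi> i j. if i = 1 then (if j = 1 then 1/b else 0) else (if j = 1 then 0 else 1))"
    have "P ** Q = mat 1 \<and> Q ** P = mat 1"
      using \<open>b \<noteq> 0\<close> by (simp add: cmat2_eq_iff matrix_mult_cmat2_nth P_def Q_def mat_nth field_simps)
    then have "invertible P" unfolding invertible_def by blast
    moreover have "M ** P = P ** jordan_block2 l"
      using True diag by (simp add: cmat2_eq_iff matrix_mult_cmat2_nth P_def b_def)
    ultimately show ?thesis by (rule has_jordan_form_block_if_conj)
  qed
qed

subsection \<open>Boundedness of the orbit\<close>

lemma bounded_orbit_mat:
  assumes "cmod c \<le> 1"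
  shows "bounded_orbit (mat c)"
proof -
  have "norm (mpow (mat c) n) \<le> 2" for n
  proof -
    have "norm (mpow (mat c) n) \<le> cmod c ^ n + cmod c ^ n"
      using norm_cmat2_le_entries[of "mpow (mat c) n"] by (simp add: mpow_mat mat_nth norm_power)
    also have "\<dots> \<le> 1 + 1" using assms by (intro add_mono power_le_one) auto
    finally show ?thesis by simp
  qed
  then show ?thesis unfolding bounded_orbit_iff by blast
qed

lemma bounded_orbit_if_lucasU_bounded:
  assumes "a + b = trace M" "a * b = det M" "cmod a \<le> 1" "cmod b \<le> 1"
    and K: "\<And>n. cmod (lucasU a b n) \<le> K"
  shows "bounded_orbit M"
proof -
  let ?S = "cmod (M$1$1) + cmod (M$1$2) + cmod (M$2$1) + cmod (M$2$2)"
  have C: "cmod (lucasC a b n) \<le> max 1 K" for n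
  proof (cases n)
    case (Suc m)
    have "cmod (lucasC a b n) = cmod a * cmod b * cmod (lucasU a b m)" by (simp add: Suc norm_mult)
    also have "\<dots> \<le> 1 * 1 * K" using assms(3,4) K[of m] by (intro mult_mono) auto
    finally show ?thesis by simp
  qed simp
  have "norm (mpow M n) \<le> K * ?S + 2 * max 1 K" for n
  proof -
    have "norm (mpow M n) \<le> cmod (lucasU a b n) * ?S + 2 * cmod (lucasC a b n)"
      by (rule norm_mpow_le_lucas[OF assms(1,2)])
    also have "\<dots> \<le> K * ?S + 2 * max 1 K" using K[of n] C[of n]
      by (intro add_mono mult_right_mono) auto
    finally show ?thesis .
  qed
  then show ?thesis unfolding bounded_orbit_iff by blast
qed

lemma bounded_orbit_if_not_unimodular_jordan:
  assumes "char_roots_in_disc M" "\<not> (\<exists>l. cmod l = 1 \<and> has_jordan_form_block M l)"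
  shows "bounded_orbit M"
proof (cases "is_scalar M")
  case True
  then obtain c where M: "M = mat c" by (auto simp: is_scalar_def)
  have "c + c = trace M" "c * c = det M" by (simp_all add: M trace_cmat2 det_2 mat_nth)
  then show ?thesis using char_roots_in_discD[OF assms(1)] M bounded_orbit_mat by metis
next
  case False
  obtain a b where ab: "a + b = trace M" "a * b = det M" using vieta_roots_exist by blast
  note roots = char_roots_in_discD[OF assms(1) ab]
  have "\<not> (a = b \<and> cmod a = 1)"
    using has_jordan_form_blockI[of M a] ab False assms(2) by auto
  then obtain K where "\<And>n. cmod (lucasU a b n) \<le> K" using lucasU_bounded roots by blast
  then show ?thesis using bounded_orbit_if_lucasU_bounded ab roots by blast
qed

lemma not_bounded_orbit_if_unimodular_jordan:
  assumes "has_jordan_form_block M l" "cmod l = 1"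
  shows "\<not> bounded_orbit M"
proof
  assume "bounded_orbit M"
  then obtain B where B: "\<And>k. norm (mpow M (2^k)) \<le> B" using bounded_orbit_iff by blast
  note J = has_jordan_form_blockD[OF assms(1)]
  have "\<exists>C>0. \<forall>n. cmod (lucasU l l n) \<le> C * norm (mpow M n) \<and> cmod (lucasC l l n) \<le> C * norm (mpow M n)"
    using lucas_le_norm_mpow[of l l M] J by simp
  then obtain C where C: "C > 0" "\<And>n. cmod (lucasU l l n) \<le> C * norm (mpow M n)" by blast
  obtain k where k: "C * B < 2 ^ k" using real_arch_pow[of 2 "C * B"] by auto
  have "lucasU l l (2^k) = of_nat (2^k) * l ^ (2^k - 1)"
    using lucasU_same[of l "2^k - 1"] by simp
  then have "cmod (lucasU l l (2^k)) = 2^k" using assms(2) by (simp add: norm_mult norm_power)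
  moreover have "C * norm (mpow M (2^k)) \<le> C * B" using B[of k] C(1) by (intro mult_left_mono) auto
  ultimately show False using C(2)[of "2^k"] k by linarith
qed

theorem proposition3p5:
  shows "(\<forall>M. bounded_orbit M \<longrightarrow> M \<in> closure Ws_Id_0) \<and>
         (\<forall>M \<in> closure Ws_Id_0.
            bounded_orbit M \<longleftrightarrow> \<not> (\<exists>l. cmod l = 1 \<and> has_jordan_form_block M l))"
proof (intro conjI allI impI ballI iffI)
  fix M
  show "bounded_orbit M \<Longrightarrow> M \<in> closure Ws_Id_0"
    unfolding in_closure_Ws_Id_0_iff by (rule char_roots_in_disc_if_bounded_orbit)
  show "bounded_orbit M \<Longrightarrow> \<not> (\<exists>l. cmod l = 1 \<and> has_jordan_form_block M l)"
    using not_bounded_orbit_if_unimodular_jordan by blast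
  show "M \<in> closure Ws_Id_0 \<Longrightarrow> \<not> (\<exists>l. cmod l = 1 \<and> has_jordan_form_block M l) \<Longrightarrow> bounded_orbit M"
    unfolding in_closure_Ws_Id_0_iff by (rule bounded_orbit_if_not_unimodular_jordan)
qed

end
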